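(* Let $D$ be a pv-monoid (idempotent, with symmetric valuation function), $P$ a nonempty finite set of ports and $f$ a PCL formula over $P$. Then there exist finite index sets $I$ and $J_i$ ($i\in I$) and full monomials $m_{i,j}$ ($i\in I$, $j\in J_i$) such that \[f\equiv\bigoplus_{i\in I}\sum_{j\in J_i}m_{i,j}\equiv\bigoplus_{i\in I}\Big(1\otimes\sum_{j\in J_i}m_{i,j}\Big).\]
   Context: A pv-monoid $(D,\oplus,\mathrm{val},\otimes,0,1)$ consists of a commutative monoid $(D,\oplus,0)$, a map $\mathrm{val}$ from nonempty finite sequences over $D$ to $D$ with $\mathrm{val}(d)=d$ and $\mathrm{val}(d_1,\dots,d_n)=0$ whenever some $d_i=0$, a binary operation $\otimes$ and an element $1$ with $\mathrm{val}(1,\dots,1)=1$, $0\otimes d=d\otimes0=0$, $1\otimes d=d\otimes1=d$. Standing assumption: $D$ is idempotent and $\mathrm{val}$ is symmetric. An empty $\oplus$-sum is $0$. $I(P)$ is the set of nonempty subsets of $P$, $C(P)$ the set of nonempty subsets of $I(P)$. PIL formulas: $\phi::=true\mid p\mid\overline{\phi}\mid\phi\vee\phi$ ($p\in P$), $\alpha\models_i p$ iff $p\in\alpha$, negation and disjunction as usual, $\wedge$ via De Morgan. A full monomial is a PIL formula $\bigwedge_{p\in P_+}p\wedge\bigwedge_{p\in P_-}\overline p$ with $P_+\cup P_-=P$, $P_+\cap P_-=\emptyset$. PCL formulas: $f::=true\mid\phi\mid\neg f\mid f\sqcup f\mid f+f$; $\gamma\models true$; $\gamma\models\phi$ iff every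 $\alpha\in\gamma$ satisfies $\phi$; $\neg,\sqcup$ are complement and union; $\gamma\models f_1+f_2$ iff $\gamma=\gamma_1\cup\gamma_2$ with $\gamma_1,\gamma_2\in C(P)$, $\gamma_1\models f_1,\gamma_2\models f_2$. $\sum_{j\in J}m_j$ is the $+$-combination. Weighted formulas are built from constants $d\in D$ and PCL formulas by $\oplus,\otimes$ (and further operators); semantics $\|\cdot\|:C(P)\to D$ with $\|d\|(\gamma)=d$, $\|f\|(\gamma)=1$ if $\gamma\models f$ and $0$ otherwise, $\oplus,\otimes$ pointwise. $\equiv$ means equality of semantics on all of $C(P)$. *)

theory Defs
  imports Main "HOL-Library.Multiset"
begin

text \<open>The valuation function val is defined on nonempty finite sequences; it is
modelled as a function on lists whose value on the empty list is irrelevant.\<close>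

definition pv_monoid ::
  "('d \<Rightarrow> 'd \<Rightarrow> 'd) \<Rightarrow> ('d list \<Rightarrow> 'd) \<Rightarrow> ('d \<Rightarrow> 'd \<Rightarrow> 'd) \<Rightarrow> 'd \<Rightarrow> 'd \<Rightarrow> bool" where
  "pv_monoid add val mul z u \<longleftrightarrow>
     (\<forall>a b c. add (add a b) c = add a (add b c)) \<and>
     (\<forall>a b. add a b = add b a) \<and>
     (\<forall>a. add z a = a) \<and>
     (\<forall>d. val [d] = d) \<and>
     (\<forall>xs. xs \<noteq> [] \<and> z \<in> set xs \<longrightarrow> val xs = z) \<and>
     (\<forall>n. n \<ge> 1 \<longrightarrow> val (replicate n u) = u) \<and>
     (\<forall>d. mul z d = z \<and> mul d z = z) \<and>
     (\<forall>d. mul u d = d \<and> mul d u = d)"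

definition idempotent_pv :: "('d \<Rightarrow> 'd \<Rightarrow> 'd) \<Rightarrow> bool" where
  "idempotent_pv add \<longleftrightarrow> (\<forall>d. add d d = d)"

definition symmetric_val :: "('d list \<Rightarrow> 'd) \<Rightarrow> bool" where
  "symmetric_val val \<longleftrightarrow> (\<forall>xs ys. xs \<noteq> [] \<and> mset xs = mset ys \<longrightarrow> val xs = val ys)"

datatype 'p pil = PTrue | PVar 'p | PNot "'p pil" | POr "'p pil" "'p pil"

fun pil_atoms :: "'p pil \<Rightarrow> 'p set" where
  "pil_atoms PTrue = {}"
| "pil_atoms (PVar p) = {p}"
| "pil_atoms (PNot \<phi>) = pil_atoms \<phi>"
| "pil_atoms (POr \<phi> \<psi>) = pil_atoms \<phi> \<union> pil_atoms \<psi>"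

fun pil_sat :: "'p set \<Rightarrow> 'p pil \<Rightarrow> bool" where
  "pil_sat \<alpha> PTrue = True"
| "pil_sat \<alpha> (PVar p) = (p \<in> \<alpha>)"
| "pil_sat \<alpha> (PNot \<phi>) = (\<not> pil_sat \<alpha> \<phi>)"
| "pil_sat \<alpha> (POr \<phi> \<psi>) = (pil_sat \<alpha> \<phi> \<or> pil_sat \<alpha> \<psi>)"

definition PAnd :: "'p pil \<Rightarrow> 'p pil \<Rightarrow> 'p pil" where
  "PAnd \<phi> \<psi> = PNot (POr (PNot \<phi>) (PNot \<psi>))"

definition lit :: "'p set \<Rightarrow> 'p \<Rightarrow> 'p pil" where
  "lit Pplus p = (if p \<in> Pplus then PVar p else PNot (PVar p))"

fun monomial :: "'p set \<Rightarrow> 'p list \<Rightarrow> 'p pil" where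
  "monomial Pplus [] = PTrue"
| "monomial Pplus [p] = lit Pplus p"
| "monomial Pplus (p # ps) = PAnd (lit Pplus p) (monomial Pplus ps)"

definition full_monomial :: "'p set \<Rightarrow> 'p pil \<Rightarrow> bool" where
  "full_monomial P m \<longleftrightarrow>
     (\<exists>xs Pplus. set xs = P \<and> distinct xs \<and> Pplus \<subseteq> P \<and> m = monomial Pplus xs)"

definition I_P :: "'p set \<Rightarrow> 'p set set" where
  "I_P P = {\<alpha>. \<alpha> \<subseteq> P \<and> \<alpha> \<noteq> {}}"

definition C_P :: "'p set \<Rightarrow> 'p set set set" where
  "C_P P = {\<gamma>. \<gamma> \<subseteq> I_P P \<and> \<gamma> \<noteq> {}}"

datatype 'p pcl = CTrue | CPil "'p pil" | CNot "'p pcl" | CSqcup "'p pcl" "'p pcl"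
  | CPlus "'p pcl" "'p pcl"

fun pcl_atoms :: "'p pcl \<Rightarrow> 'p set" where
  "pcl_atoms CTrue = {}"
| "pcl_atoms (CPil \<phi>) = pil_atoms \<phi>"
| "pcl_atoms (CNot f) = pcl_atoms f"
| "pcl_atoms (CSqcup f g) = pcl_atoms f \<union> pcl_atoms g"
| "pcl_atoms (CPlus f g) = pcl_atoms f \<union> pcl_atoms g"

fun pcl_sat :: "'p set \<Rightarrow> 'p set set \<Rightarrow> 'p pcl \<Rightarrow> bool" where
  "pcl_sat P \<gamma> CTrue = True"
| "pcl_sat P \<gamma> (CPil \<phi>) = (\<forall>\<alpha>\<in>\<gamma>. pil_sat \<alpha> \<phi>)"
| "pcl_sat P \<gamma> (CNot f) = (\<not> pcl_sat P \<gamma> f)"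
| "pcl_sat P \<gamma> (CSqcup f g) = (pcl_sat P \<gamma> f \<or> pcl_sat P \<gamma> g)"
| "pcl_sat P \<gamma> (CPlus f g) =
     (\<exists>\<gamma>1 \<gamma>2. \<gamma>1 \<in> C_P P \<and> \<gamma>2 \<in> C_P P \<and> \<gamma> = \<gamma>1 \<union> \<gamma>2 \<and> pcl_sat P \<gamma>1 f \<and> pcl_sat P \<gamma>2 g)"

fun plus_list :: "'p pil list \<Rightarrow> 'p pcl" where
  "plus_list [] = CTrue"
| "plus_list [m] = CPil m"
| "plus_list (m # ms) = CPlus (CPil m) (plus_list ms)"

datatype ('p, 'd) wpcl = WConst 'd | WPcl "'p pcl" | WOplus "('p, 'd) wpcl" "('p, 'd) wpcl"
  | WOtimes "('p, 'd) wpcl" "('p, 'd) wpcl"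

fun wsem :: "('d \<Rightarrow> 'd \<Rightarrow> 'd) \<Rightarrow> ('d \<Rightarrow> 'd \<Rightarrow> 'd) \<Rightarrow> 'd \<Rightarrow> 'd \<Rightarrow> 'p set
    \<Rightarrow> ('p, 'd) wpcl \<Rightarrow> 'p set set \<Rightarrow> 'd" where
  "wsem add mul z u P (WConst d) \<gamma> = d"
| "wsem add mul z u P (WPcl f) \<gamma> = (if pcl_sat P \<gamma> f then u else z)"
| "wsem add mul z u P (WOplus w v) \<gamma> =
     add (wsem add mul z u P w \<gamma>) (wsem add mul z u P v \<gamma>)"
| "wsem add mul z u P (WOtimes w v) \<gamma> =
     mul (wsem add mul z u P w \<gamma>) (wsem add mul z u P v \<gamma>)"

fun oplus_list :: "'d \<Rightarrow> ('p, 'd) wpcl list \<Rightarrow> ('p, 'd) wpcl" where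
  "oplus_list z [] = WConst z"
| "oplus_list z [w] = w"
| "oplus_list z (w # ws) = WOplus w (oplus_list z ws)"

end

theory Submission
  imports Defs
begin

text \<open>Over a finite set of ports, the full monomial with positive part \<open>\<alpha>\<close> is satisfied by
the interaction \<open>\<alpha>\<close> alone, so the \<open>+\<close>-combination of the full monomials of the interactions
of a coalition \<open>\<gamma>\<close> is satisfied by \<open>\<gamma>\<close> alone. As there are only finitely many coalitions, \<open>f\<close>
is the disjunction of these characteristic formulas over the coalitions satisfying \<open>f\<close>.
The semantics of a PCL formula takes only the values \<open>0\<close> and \<open>1\<close>, and on such values an
idempotent \<open>\<oplus>\<close> computes this disjunction; multiplying by \<open>1\<close> changes nothing.\<close>

lemma pil_sat_PAnd [simp]: "pil_sat \<beta> (PAnd \<phi> \<psi>) \<longleftrightarrow> pil_sat \<beta> \<phi> \<and> pil_sat \<beta> \<psi>"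
  by (simp add: PAnd_def)

lemma pil_sat_monomial: "pil_sat \<beta> (monomial \<alpha> xs) \<longleftrightarrow> (\<forall>p\<in>set xs. p \<in> \<beta> \<longleftrightarrow> p \<in> \<alpha>)"
  by (induction \<alpha> xs rule: monomial.induct) (auto simp: lit_def)

lemma pil_sat_monomial_iff_eq:
  assumes "set xs = P" "\<alpha> \<subseteq> P" "\<beta> \<subseteq> P"
  shows "pil_sat \<beta> (monomial \<alpha> xs) \<longleftrightarrow> \<beta> = \<alpha>"
  using assms by (auto simp: pil_sat_monomial)

lemma full_monomial_monomial:
  "set xs = P \<Longrightarrow> distinct xs \<Longrightarrow> \<alpha> \<subseteq> P \<Longrightarrow> full_monomial P (monomial \<alpha> xs)"
  unfolding full_monomial_def by blast

lemma finite_C_P: "finite P \<Longrightarrow> finite (C_P P)"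
  by (rule finite_subset[of _ "Pow (Pow P)"]) (auto simp: C_P_def I_P_def)

lemma pcl_sat_CPil_iff_singleton:
  assumes "\<gamma> \<in> C_P P" and "\<And>\<beta>. \<beta> \<in> I_P P \<Longrightarrow> pil_sat \<beta> \<phi> \<longleftrightarrow> \<beta> = \<alpha>"
  shows "pcl_sat P \<gamma> (CPil \<phi>) \<longleftrightarrow> \<gamma> = {\<alpha>}"
  using assms by (auto simp: C_P_def)

lemma pcl_sat_plus_list_iff_eq:
  assumes "\<And>\<beta> \<alpha>. \<beta> \<in> I_P P \<Longrightarrow> \<alpha> \<in> set as \<Longrightarrow> pil_sat \<beta> (M \<alpha>) \<longleftrightarrow> \<beta> = \<alpha>"
    and "as \<noteq> []" and "set as \<subseteq> I_P P" and "\<gamma> \<in> C_P P"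
  shows "pcl_sat P \<gamma> (plus_list (map M as)) \<longleftrightarrow> \<gamma> = set as"
  using assms
proof (induction as arbitrary: \<gamma> rule: induct_list012)
  case (2 \<alpha>)
  then show ?case
    using pcl_sat_CPil_iff_singleton[of \<gamma> P "M \<alpha>" \<alpha>] by simp
next
  case (3 \<alpha> \<alpha>' as)
  have tail: "pcl_sat P \<gamma>' (plus_list (map M (\<alpha>' # as))) \<longleftrightarrow> \<gamma>' = set (\<alpha>' # as)"
    if "\<gamma>' \<in> C_P P" for \<gamma>'
    using "3.IH"(2) "3.prems" that by simp
  have head: "pcl_sat P \<gamma>' (CPil (M \<alpha>)) \<longleftrightarrow> \<gamma>' = {\<alpha>}" if "\<gamma>' \<in> C_P P" for \<gamma>'
    using "3.prems"(1) that pcl_sat_CPil_iff_singleton[of \<gamma>' P "M \<alpha>" \<alpha>] by simp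
  have "{\<alpha>} \<in> C_P P" "set (\<alpha>' # as) \<in> C_P P"
    using "3.prems"(3) by (auto simp: C_P_def)
  have "pcl_sat P \<gamma> (plus_list (map M (\<alpha> # \<alpha>' # as))) \<longleftrightarrow>
      (\<exists>\<gamma>\<^sub>1 \<gamma>\<^sub>2. \<gamma>\<^sub>1 \<in> C_P P \<and> \<gamma>\<^sub>2 \<in> C_P P \<and> \<gamma> = \<gamma>\<^sub>1 \<union> \<gamma>\<^sub>2 \<and>
        \<gamma>\<^sub>1 = {\<alpha>} \<and> \<gamma>\<^sub>2 = set (\<alpha>' # as))"
    using head tail by (simp only: list.map plus_list.simps pcl_sat.simps) blast
  also have "\<dots> \<longleftrightarrow> \<gamma> = set (\<alpha> # \<alpha>' # as)"
    using \<open>{\<alpha>} \<in> C_P P\<close> \<open>set (\<alpha>' # as) \<in> C_P P\<close> by auto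
  finally show ?case .
qed simp

lemma coalition_characteristic_plus_list:
  assumes "finite P" and "\<gamma>\<^sub>0 \<in> C_P P"
  shows "\<exists>js. js \<noteq> [] \<and> (\<forall>m\<in>set js. full_monomial P m) \<and>
    (\<forall>\<gamma>\<in>C_P P. pcl_sat P \<gamma> (plus_list js) \<longleftrightarrow> \<gamma> = \<gamma>\<^sub>0)"
proof -
  obtain xs where xs: "set xs = P" "distinct xs"
    using assms(1) finite_distinct_list by blast
  have \<gamma>\<^sub>0: "\<gamma>\<^sub>0 \<subseteq> I_P P" "\<gamma>\<^sub>0 \<noteq> {}"
    using assms(2) by (auto simp: C_P_def)
  then have "finite \<gamma>\<^sub>0"
    using assms(1) by (auto simp: I_P_def intro: finite_subset[of _ "Pow P"])
  then obtain as where as: "set as = \<gamma>\<^sub>0"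
    using finite_list by blast
  define js where "js = map (\<lambda>\<alpha>. monomial \<alpha> xs) as"
  have "pil_sat \<beta> (monomial \<alpha> xs) \<longleftrightarrow> \<beta> = \<alpha>" if "\<beta> \<in> I_P P" "\<alpha> \<in> I_P P" for \<beta> \<alpha>
    using that xs(1) by (simp add: I_P_def pil_sat_monomial_iff_eq)
  then have "pcl_sat P \<gamma> (plus_list js) \<longleftrightarrow> \<gamma> = \<gamma>\<^sub>0" if "\<gamma> \<in> C_P P" for \<gamma>
    unfolding js_def as[symmetric]
    by (rule pcl_sat_plus_list_iff_eq) (use as \<gamma>\<^sub>0 that in auto)
  moreover have "\<forall>m\<in>set js. full_monomial P m"
    using as \<gamma>\<^sub>0 xs by (auto simp: js_def I_P_def intro!: full_monomial_monomial)
  moreover have "js \<noteq> []"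
    using as \<gamma>\<^sub>0 by (auto simp: js_def)
  ultimately show ?thesis
    by blast
qed

lemma coalition_set_plus_normal_form:
  assumes "finite P" and "S \<subseteq> C_P P"
  shows "\<exists>ms. (\<forall>js\<in>set ms. js \<noteq> [] \<and> (\<forall>m\<in>set js. full_monomial P m)) \<and>
    (\<forall>\<gamma>\<in>C_P P. (\<exists>js\<in>set ms. pcl_sat P \<gamma> (plus_list js)) \<longleftrightarrow> \<gamma> \<in> S)"
proof -
  have "\<forall>\<gamma>\<^sub>0\<in>S. \<exists>js. js \<noteq> [] \<and> (\<forall>m\<in>set js. full_monomial P m) \<and>
      (\<forall>\<gamma>\<in>C_P P. pcl_sat P \<gamma> (plus_list js) \<longleftrightarrow> \<gamma> = \<gamma>\<^sub>0)"
    using assms coalition_characteristic_plus_list by blast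
  then obtain chr where chr: "\<forall>\<gamma>\<^sub>0\<in>S. chr \<gamma>\<^sub>0 \<noteq> [] \<and> (\<forall>m\<in>set (chr \<gamma>\<^sub>0). full_monomial P m) \<and>
      (\<forall>\<gamma>\<in>C_P P. pcl_sat P \<gamma> (plus_list (chr \<gamma>\<^sub>0)) \<longleftrightarrow> \<gamma> = \<gamma>\<^sub>0)"
    by (rule bchoice[elim_format]) blast
  obtain Ss where "set Ss = S"
    using finite_list finite_subset[OF assms(2) finite_C_P[OF assms(1)]] by blast
  then show ?thesis
    using chr by (intro exI[of _ "map chr Ss"]) auto
qed

lemma wsem_oplus_list_WPcl:
  assumes "\<And>x. add z x = x" and "\<And>x. add x z = x" and "add u u = u"
  shows "wsem add mul z u P (oplus_list z (map WPcl fs)) \<gamma> =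
    (if \<exists>f\<in>set fs. pcl_sat P \<gamma> f then u else z)"
  by (induction fs rule: induct_list012) (auto simp: assms)

lemma wsem_oplus_list_map_cong:
  assumes "\<And>x. wsem add mul z u P (F x) \<gamma> = wsem add mul z u P (G x) \<gamma>"
  shows "wsem add mul z u P (oplus_list z (map F xs)) \<gamma> =
    wsem add mul z u P (oplus_list z (map G xs)) \<gamma>"
  by (induction xs rule: induct_list012) (simp_all add: assms)

theorem mainTheorem11:
  fixes add mul :: "'d \<Rightarrow> 'd \<Rightarrow> 'd" and val :: "'d list \<Rightarrow> 'd"
    and z u :: 'd and P :: "'p set" and f :: "'p pcl"
  assumes "pv_monoid add val mul z u"
    and "idempotent_pv add"
    and "symmetric_val val"
    and "finite P" and "P \<noteq> {}"
    and "pcl_atoms f \<subseteq> P"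
  shows "\<exists>ms :: 'p pil list list.
           (\<forall>js\<in>set ms. js \<noteq> [] \<and> (\<forall>m\<in>set js. full_monomial P m)) \<and>
           (\<forall>\<gamma>\<in>C_P P. wsem add mul z u P (WPcl f) \<gamma> =
              wsem add mul z u P (oplus_list z (map (\<lambda>js. WPcl (plus_list js)) ms)) \<gamma>) \<and>
           (\<forall>\<gamma>\<in>C_P P. wsem add mul z u P (oplus_list z (map (\<lambda>js. WPcl (plus_list js)) ms)) \<gamma> =
              wsem add mul z u P
                (oplus_list z (map (\<lambda>js. WOtimes (WConst u) (WPcl (plus_list js))) ms)) \<gamma>)"
proof -
  \<comment> \<open>Only the monoid laws for \<open>0\<close> and \<open>1\<close> and idempotence are used: \<open>f\<close> enters only through
    its satisfying coalitions in \<open>C_P P\<close>, so neither its atoms nor the valuation matter.\<close>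
  have add: "\<And>x. add z x = x" "\<And>x. add x z = x" "add u u = u"
    using assms(1,2) unfolding pv_monoid_def idempotent_pv_def by metis+
  have mul: "\<And>x. mul u x = x"
    using assms(1) unfolding pv_monoid_def by blast
  obtain ms where ms: "\<forall>js\<in>set ms. js \<noteq> [] \<and> (\<forall>m\<in>set js. full_monomial P m)"
    and ms_sat: "\<forall>\<gamma>\<in>C_P P. (\<exists>js\<in>set ms. pcl_sat P \<gamma> (plus_list js)) \<longleftrightarrow> pcl_sat P \<gamma> f"
    using coalition_set_plus_normal_form[OF assms(4), of "{\<gamma> \<in> C_P P. pcl_sat P \<gamma> f}"] by auto
  have "wsem add mul z u P (oplus_list z (map (\<lambda>js. WPcl (plus_list js)) ms)) \<gamma> =
      (if \<exists>js\<in>set ms. pcl_sat P \<gamma> (plus_list js) then u else z)" for \<gamma>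
    using wsem_oplus_list_WPcl[OF add, of mul P "map plus_list ms" \<gamma>] by (simp add: comp_def)
  then have "\<forall>\<gamma>\<in>C_P P. wsem add mul z u P (WPcl f) \<gamma> =
      wsem add mul z u P (oplus_list z (map (\<lambda>js. WPcl (plus_list js)) ms)) \<gamma>"
    using ms_sat by simp
  moreover have "wsem add mul z u P (oplus_list z (map (\<lambda>js. WPcl (plus_list js)) ms)) \<gamma> =
      wsem add mul z u P (oplus_list z (map (\<lambda>js. WOtimes (WConst u) (WPcl (plus_list js))) ms)) \<gamma>"
    for \<gamma>
    by (rule wsem_oplus_list_map_cong) (simp add: mul)
  ultimately show ?thesis
    using ms by blast
qed

end
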